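(* Let $n\ge1$, let $d_1,\dots,d_n\in\mathbb R$, let $K_1,K_2$ be a partition of $\{1,\dots,n\}$ (either may be empty), and let $v:\Delta_n\to\mathbb R^n$ be a continuous function such that (i) for all $\boldsymbol\lambda\in\Delta_n$: $\boldsymbol\lambda^T v(\boldsymbol\lambda)=\sum_{k=1}^n\lambda_kd_k$; (ii) for all $k\in K_1$ and all $\boldsymbol\lambda\in\Delta_n$ with $\lambda_k=0$: $v_k(\boldsymbol\lambda)<d_k$; (iii) for all $k\in K_2$ and all $\boldsymbol\lambda\in\Delta_n$: $v_k(\boldsymbol\lambda)\le d_k$. Then there exists $\boldsymbol\lambda^*\in\Delta_n$ with $v(\boldsymbol\lambda^* )=[d_1,\dots,d_n]^T$.
   Context: $\Delta_n=\{(\lambda_1,\dots,\lambda_n)\in\mathbb R^n: \lambda_i\ge0,\ \sum_{i=1}^n\lambda_i=1\}$ is the standard simplex. *)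

theory Defs
  imports "HOL-Analysis.Analysis"
begin

text \<open>The standard simplex Delta_n, indices ranging over the finite type 'n (n = CARD('n)).\<close>
definition std_simplex :: "(real ^ 'n) set" where
  "std_simplex = {lam. (\<forall>i. 0 \<le> lam $ i) \<and> (\<Sum>i\<in>UNIV. lam $ i) = 1}"

end

theory Submission
  imports Defs
begin

text \<open>This is Nash's existence argument. The map
  \<open>\<lambda> \<mapsto> (\<lambda> + c(\<lambda>)) / (1 + \<Sum>\<^sub>j c\<^sub>j(\<lambda>))\<close> with deficits \<open>c\<^sub>k(\<lambda>) = max 0 (d\<^sub>k - v\<^sub>k(\<lambda>))\<close>
  is a continuous self-map of the simplex, so by Brouwer it has a fixed point \<open>\<lambda>\<close>.
  If the total deficit were positive, the fixed-point equation \<open>c\<^sub>k = \<lambda>\<^sub>k \<Sum>\<^sub>j c\<^sub>j\<close> would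
  give \<open>v\<^sub>k < d\<^sub>k\<close> wherever \<open>\<lambda>\<^sub>k > 0\<close>, contradicting \<open>\<lambda>\<^sup>T(v - d) = 0\<close>. Hence \<open>v \<ge> d\<close>,
  so \<open>\<lambda>\<^sup>T(v - d) = 0\<close> forces \<open>v\<^sub>k = d\<^sub>k\<close> where \<open>\<lambda>\<^sub>k > 0\<close>, while where \<open>\<lambda>\<^sub>k = 0\<close>
  hypotheses (ii) and (iii) give \<open>v\<^sub>k \<le> d\<^sub>k\<close>.\<close>

lemma closed_std_simplex: "closed (std_simplex :: (real ^ 'n) set)"
proof -
  have "std_simplex = (\<Inter>i. {lam::real^'n. 0 \<le> lam $ i}) \<inter> {lam. (\<Sum>i\<in>UNIV. lam $ i) = 1}"
    unfolding std_simplex_def by auto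
  moreover have "closed {lam::real^'n. 0 \<le> lam $ i}" for i
    by (intro closed_Collect_le continuous_intros)
  moreover have "closed {lam::real^'n. (\<Sum>i\<in>UNIV. lam $ i) = 1}"
    by (intro closed_Collect_eq continuous_intros)
  ultimately show ?thesis by (metis closed_INT closed_Int)
qed

lemma norm_le_one_if_in_std_simplex:
  assumes "lam \<in> std_simplex"
  shows "norm lam \<le> 1"
proof -
  have "(\<Sum>i\<in>UNIV. \<bar>lam $ i\<bar>) = 1"
    using assms unfolding std_simplex_def by auto
  then show ?thesis using norm_le_l1_cart[of lam] by simp
qed

lemma compact_std_simplex: "compact (std_simplex :: (real ^ 'n) set)"
  using closed_std_simplex norm_le_one_if_in_std_simplex
  by (metis bounded_iff compact_eq_bounded_closed)

lemma convex_std_simplex: "convex (std_simplex :: (real ^ 'n) set)"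
  unfolding convex_def std_simplex_def
  by (auto simp: sum.distrib sum_distrib_left[symmetric])

lemma std_simplex_nonempty: "(std_simplex :: (real ^ 'n) set) \<noteq> {}"
proof -
  have "(\<chi> i. 1 / real CARD('n)) \<in> (std_simplex :: (real ^ 'n) set)"
    unfolding std_simplex_def by auto
  then show ?thesis by blast
qed

lemma std_simplex_nonneg: "lam \<in> std_simplex \<Longrightarrow> 0 \<le> lam $ k"
  unfolding std_simplex_def by auto

lemma std_simplex_ex_pos:
  assumes "lam \<in> std_simplex"
  shows "\<exists>k. 0 < lam $ k"
proof (rule ccontr)
  assume "\<not> (\<exists>k. 0 < lam $ k)"
  then have "lam $ k = 0" for k
    using std_simplex_nonneg[OF assms, of k] by (meson not_less order.antisym)
  then show False using assms unfolding std_simplex_def by simp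
qed

lemma inner_eq_iff_weighted_excess_eq_0:
  fixes lam w d :: "real ^ 'n"
  shows "lam \<bullet> w = lam \<bullet> d \<longleftrightarrow> (\<Sum>k\<in>UNIV. lam $ k * (w $ k - d $ k)) = 0"
  by (simp add: inner_vec_def algebra_simps sum_subtractf)

definition deficit :: "real ^ 'n \<Rightarrow> real ^ 'n \<Rightarrow> real ^ 'n" where
  "deficit d w = (\<chi> k. max 0 (d $ k - w $ k))"

definition total_deficit :: "real ^ 'n \<Rightarrow> real ^ 'n \<Rightarrow> real" where
  "total_deficit d w = (\<Sum>k\<in>UNIV. deficit d w $ k)"

definition nash_map :: "real ^ 'n \<Rightarrow> (real ^ 'n \<Rightarrow> real ^ 'n) \<Rightarrow> real ^ 'n \<Rightarrow> real ^ 'n" where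
  "nash_map d v lam = inverse (1 + total_deficit d (v lam)) *\<^sub>R (lam + deficit d (v lam))"

lemma deficit_nonneg: "0 \<le> deficit d w $ k"
  unfolding deficit_def by simp

lemma total_deficit_nonneg: "0 \<le> total_deficit d w"
  unfolding total_deficit_def by (simp add: deficit_nonneg sum_nonneg)

lemma deficit_pos_iff: "0 < deficit d w $ k \<longleftrightarrow> w $ k < d $ k"
  unfolding deficit_def by (simp add: less_max_iff_disj)

lemma deficit_eq_0_iff: "deficit d w = 0 \<longleftrightarrow> d \<le> w"
proof -
  have "max 0 (d $ k - w $ k) = 0 \<longleftrightarrow> d $ k \<le> w $ k" for k
    by (simp add: max_def)
  then show ?thesis unfolding deficit_def by (simp add: vec_eq_iff less_eq_vec_def)
qed

lemma continuous_on_nash_map: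
  assumes "continuous_on S v"
  shows "continuous_on S (nash_map d v)"
proof -
  have deficit: "continuous_on S (\<lambda>lam. deficit d (v lam))"
    unfolding deficit_def by (intro continuous_on_vec_lambda continuous_intros assms)
  then have "continuous_on S (\<lambda>lam. total_deficit d (v lam))"
    unfolding total_deficit_def by (intro continuous_on_sum continuous_on_component)
  moreover have "1 + total_deficit d (v lam) \<noteq> 0" for lam
    using total_deficit_nonneg[of d "v lam"] by linarith
  ultimately show ?thesis
    unfolding nash_map_def using deficit by (intro continuous_intros) auto
qed

lemma nash_map_in_std_simplex:
  assumes "lam \<in> std_simplex"
  shows "nash_map d v lam \<in> std_simplex"
proof -
  let ?c = "deficit d (v lam)" and ?S = "total_deficit d (v lam)"
  have pos: "0 < 1 + ?S" using total_deficit_nonneg[of d "v lam"] by linarith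
  have "(\<Sum>k\<in>UNIV. lam $ k + ?c $ k) = 1 + ?S"
    using assms unfolding std_simplex_def total_deficit_def by (simp add: sum.distrib)
  then have "(\<Sum>k\<in>UNIV. (lam $ k + ?c $ k) / (1 + ?S)) = 1"
    using pos by (simp add: sum_divide_distrib[symmetric])
  moreover have "0 \<le> (lam $ k + ?c $ k) / (1 + ?S)" for k
    using pos std_simplex_nonneg[OF assms, of k] deficit_nonneg[of d "v lam" k] by simp
  ultimately show ?thesis
    unfolding std_simplex_def nash_map_def by (simp add: divide_inverse_commute)
qed

lemma fixed_point_of_nash_map:
  assumes "continuous_on std_simplex v"
  obtains lam where "lam \<in> std_simplex" "nash_map d v lam = lam"
  using brouwer[OF compact_std_simplex convex_std_simplex std_simplex_nonempty
      continuous_on_nash_map[OF assms]] nash_map_in_std_simplex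
  by blast

lemma nash_map_fixed_point_eq:
  assumes "nash_map d v lam = lam"
  shows "deficit d (v lam) $ k = total_deficit d (v lam) * lam $ k"
proof -
  let ?c = "deficit d (v lam)" and ?S = "total_deficit d (v lam)"
  have pos: "0 < 1 + ?S" using total_deficit_nonneg[of d "v lam"] by linarith
  have "(lam $ k + ?c $ k) / (1 + ?S) = lam $ k"
    using assms unfolding nash_map_def vec_eq_iff by (simp add: divide_inverse_commute)
  then show ?thesis using pos by (simp add: field_simps)
qed

lemma nash_map_fixed_point_dominates:
  assumes lam: "lam \<in> std_simplex" and fixed: "nash_map d v lam = lam"
    and balance: "lam \<bullet> v lam = lam \<bullet> d"
  shows "d \<le> v lam"
proof -
  let ?S = "total_deficit d (v lam)"
  have "?S = 0"
  proof (rule ccontr)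
    assume "?S \<noteq> 0"
    then have S_pos: "0 < ?S" using total_deficit_nonneg[of d "v lam"] by linarith
    have below_on_support: "v lam $ k < d $ k" if "0 < lam $ k" for k
      using nash_map_fixed_point_eq[OF fixed, of k] S_pos that deficit_pos_iff by force
    have le: "lam $ k * (v lam $ k - d $ k) \<le> 0" for k
      using below_on_support[of k] std_simplex_nonneg[OF lam, of k]
      by (cases "lam $ k = 0") (auto simp: mult_nonneg_nonpos)
    obtain k0 where k0: "0 < lam $ k0" using std_simplex_ex_pos[OF lam] by blast
    then have "lam $ k0 * (v lam $ k0 - d $ k0) < 0"
      using below_on_support[OF k0] by (simp add: mult_pos_neg)
    then have "(\<Sum>k\<in>UNIV. lam $ k * (v lam $ k - d $ k)) < 0"
      using sum_strict_mono_ex1[of UNIV "\<lambda>k. lam $ k * (v lam $ k - d $ k)" "\<lambda>_. 0"] le by auto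
    moreover have "(\<Sum>k\<in>UNIV. lam $ k * (v lam $ k - d $ k)) = 0"
      using balance by (simp add: inner_eq_iff_weighted_excess_eq_0)
    ultimately show False by simp
  qed
  then have "deficit d (v lam) = 0"
    using nash_map_fixed_point_eq[OF fixed] by (simp add: vec_eq_iff)
  then show ?thesis by (simp add: deficit_eq_0_iff)
qed

lemma complementary_slackness:
  assumes lam: "lam \<in> std_simplex" and "lam \<bullet> w = lam \<bullet> d" and "d \<le> w" and "0 < lam $ k"
  shows "w $ k = d $ k"
proof -
  have nonneg: "0 \<le> lam $ j * (w $ j - d $ j)" for j
    using std_simplex_nonneg[OF lam] \<open>d \<le> w\<close> by (simp add: less_eq_vec_def)
  have "(\<Sum>j\<in>UNIV. lam $ j * (w $ j - d $ j)) = 0"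
    using assms(2) by (simp add: inner_eq_iff_weighted_excess_eq_0)
  then have "lam $ k * (w $ k - d $ k) = 0"
    by (simp add: sum_nonneg_eq_0_iff nonneg)
  then show ?thesis using \<open>0 < lam $ k\<close> by simp
qed

theorem lemma1:
  fixes d :: "real ^ 'n"
    and K1 K2 :: "'n set"
    and v :: "real ^ 'n \<Rightarrow> real ^ 'n"
  assumes part: "K1 \<union> K2 = UNIV" "K1 \<inter> K2 = {}"
    and cont: "continuous_on std_simplex v"
    and i: "\<And>lam. lam \<in> std_simplex \<Longrightarrow> lam \<bullet> v lam = (\<Sum>k\<in>UNIV. lam $ k * d $ k)"
    and ii: "\<And>k lam. k \<in> K1 \<Longrightarrow> lam \<in> std_simplex \<Longrightarrow> lam $ k = 0 \<Longrightarrow> v lam $ k < d $ k"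
    and iii: "\<And>k lam. k \<in> K2 \<Longrightarrow> lam \<in> std_simplex \<Longrightarrow> v lam $ k \<le> d $ k"
  shows "\<exists>lam \<in> std_simplex. v lam = d"
proof -
  obtain lam where lam: "lam \<in> std_simplex" and fixed: "nash_map d v lam = lam"
    using fixed_point_of_nash_map[OF cont] by blast
  have balance: "lam \<bullet> v lam = lam \<bullet> d"
    using i[OF lam] by (simp add: inner_vec_def)
  have dom: "d \<le> v lam"
    using nash_map_fixed_point_dominates[OF lam fixed balance] .
  have "v lam $ k = d $ k" for k
  proof (cases "0 < lam $ k")
    case True
    then show ?thesis using complementary_slackness[OF lam balance dom] by blast
  next
    case False
    then have "lam $ k = 0" using std_simplex_nonneg[OF lam, of k] by linarith
    then have "v lam $ k \<le> d $ k"
      using ii[OF _ lam] iii[OF _ lam] part(1) by (cases "k \<in> K1") force+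
    then show ?thesis using dom by (simp add: less_eq_vec_def order.antisym)
  qed
  then show ?thesis using lam by (auto simp: vec_eq_iff)
qed

end
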